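(* Let $d\ge1$, $\lambda>0$, $\delta>0$, and let $f:\mathbb{R}^d\to\mathbb{R}$ satisfy: (A1) $f$ is continuous and has at least one minimizer; (A2) $\int_{\mathbb{R}^d}\exp(-f(y)/\delta)\,dy<+\infty$; and assume $f\ge\underline f$ for a constant $\underline f$. Let $\bar Z_{\lambda,\delta}(x):=\mathbb{E}_{Y\sim\mathcal N(x,\lambda\delta I)}[e^{-f(Y)/\delta}]$. Assume the S-ZOPPA sequence $(x^k)$ remains in the closed ball $B_M(0)$ of radius $M$, and let $\underline Z_M:=\inf_{\|x\|\le M}\bar Z_{\lambda,\delta}(x)$ (which is $>0$). Let $C:=e^{-\underline f/\delta}$. Then for every $\varepsilon\in(0,\underline Z_M)$ and every $k\in\mathbb{N}$, \[\mathbb{P}\Big(\frac1{N_k}\sum_{i=1}^{N_k}e^{-f(y_i^k)/\delta}<\varepsilon\Big)\le\exp\Big(-\frac{2N_k(\underline Z_M-\varepsilon)^2}{C^2}\Big).\]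
   Context: S-ZOPPA: given $x^0\in\mathbb{R}^d$ and positive integers $(N_k)$, at iteration $k$ draw $y_1^k,\dots,y_{N_k}^k$ i.i.d. from $\mathcal N(x^k,\lambda\delta I)$ (conditionally on the past) and set $x^{k+1}=\dfrac{\sum_{i=1}^{N_k}y_i^k\exp(-f(y_i^k)/\delta)}{\sum_{i=1}^{N_k}\exp(-f(y_i^k)/\delta)}$. *)

theory Defs
  imports "HOL-Probability.Probability"
begin

definition gauss_density :: "real \<Rightarrow> real^'d \<Rightarrow> real^'d \<Rightarrow> real" where
  "gauss_density s m y =
     (2 * pi * s) powr (- real CARD('d) / 2) * exp (- (norm (y - m))\<^sup>2 / (2 * s))"

definition Zbar :: "real \<Rightarrow> real \<Rightarrow> (real^'d \<Rightarrow> real) \<Rightarrow> real^'d \<Rightarrow> real" where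
  "Zbar lam del f x = (LINT y|lborel. gauss_density (lam * del) x y * exp (- f y / del))"

text \<open>S-ZOPPA driven by noise xi k i (standard Gaussian):
  y_i^k = x^k + sqrt(lambda delta) xi_i^k, and x^(k+1) the Gibbs-weighted average.\<close>
fun szoppa_x :: "real^'d \<Rightarrow> real \<Rightarrow> real \<Rightarrow> (real^'d \<Rightarrow> real) \<Rightarrow> (nat \<Rightarrow> nat)
      \<Rightarrow> (nat \<Rightarrow> nat \<Rightarrow> 'w \<Rightarrow> real^'d) \<Rightarrow> nat \<Rightarrow> 'w \<Rightarrow> real^'d" where
  "szoppa_x x0 lam del f N \<xi> 0 \<omega> = x0"
| "szoppa_x x0 lam del f N \<xi> (Suc k) \<omega> =
     (let y = (\<lambda>i. szoppa_x x0 lam del f N \<xi> k \<omega> + sqrt (lam * del) *\<^sub>R \<xi> k i \<omega>)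
      in (\<Sum>i<N k. exp (- f (y i) / del) *\<^sub>R y i) /\<^sub>R (\<Sum>i<N k. exp (- f (y i) / del)))"

definition szoppa_y :: "real^'d \<Rightarrow> real \<Rightarrow> real \<Rightarrow> (real^'d \<Rightarrow> real) \<Rightarrow> (nat \<Rightarrow> nat)
      \<Rightarrow> (nat \<Rightarrow> nat \<Rightarrow> 'w \<Rightarrow> real^'d) \<Rightarrow> nat \<Rightarrow> nat \<Rightarrow> 'w \<Rightarrow> real^'d" where
  "szoppa_y x0 lam del f N \<xi> k i \<omega> = szoppa_x x0 lam del f N \<xi> k \<omega> + sqrt (lam * del) *\<^sub>R \<xi> k i \<omega>"

end

theory Submission
  imports Defs
begin

text \<open>Given the noise of the first k rounds, the iterate x^k is fixed and the samples
  y_i^k = x^k + sqrt(lam del) xi_i^k are i.i.d. N(x^k, lam del I). Their Gibbs weights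
  exp(-f(y_i^k)/del) lie in [0, exp(-flow/del)] and have mean Zbar(x^k), which is at least
  the infimum of Zbar over the ball as long as x^k stays in it, so Hoeffding's inequality
  bounds the lower tail of their average. Since the k-th row of noise is independent of
  the earlier ones, integrating this conditional bound over the law of the past noise
  gives the unconditional one.\<close>

lemma lborel_integral_affine:
  fixes g :: "'a::euclidean_space \<Rightarrow> real"
  assumes c: "c \<noteq> 0" and [measurable]: "g \<in> borel_measurable borel"
  shows "(\<integral>y. g y \<partial>lborel) = \<bar>c\<bar> ^ DIM('a) * (\<integral>z. g (t + c *\<^sub>R z) \<partial>lborel)"
proof -
  have "(\<integral>y. g y \<partial>lborel)
      = (\<integral>y. g y \<partial>density (distr lborel borel (\<lambda>z. t + c *\<^sub>R z)) (\<lambda>_. \<bar>c\<bar> ^ DIM('a)))"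
    by (subst lborel_affine[OF c, of t]) simp
  also have "\<dots> = (\<integral>y. \<bar>c\<bar> ^ DIM('a) * g y \<partial>distr lborel borel (\<lambda>z. t + c *\<^sub>R z))"
    by (subst integral_density) auto
  also have "\<dots> = (\<integral>z. \<bar>c\<bar> ^ DIM('a) * g (t + c *\<^sub>R z) \<partial>lborel)"
    by (subst integral_distr) auto
  finally show ?thesis
    by simp
qed

lemma gauss_density_measurable [measurable]:
  "gauss_density s m \<in> borel_measurable borel"
  unfolding gauss_density_def by measurable

lemma gauss_density_nonneg: "0 \<le> gauss_density s m y"
  by (simp add: gauss_density_def)

lemma gauss_density_affine:
  fixes m z :: "real^'d"
  assumes s: "s > 0"
  shows "s ^ CARD('d) * gauss_density (s\<^sup>2) m (m + s *\<^sub>R z) = gauss_density 1 0 z"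
proof -
  have "(s\<^sup>2) powr (- real CARD('d) / 2) = (s powr 2) powr (- real CARD('d) / 2)"
    using s powr_realpow[of s 2] by simp
  also have "\<dots> = inverse (s powr real CARD('d))"
    by (simp add: powr_powr powr_minus)
  also have "\<dots> = inverse (s ^ CARD('d))"
    using s by (simp add: powr_realpow)
  finally have p: "(2 * pi * s\<^sup>2) powr (- real CARD('d) / 2)
      = (2 * pi) powr (- real CARD('d) / 2) * inverse (s ^ CARD('d))"
    using s by (simp add: powr_mult)
  have n: "- (norm (m + s *\<^sub>R z - m))\<^sup>2 / (2 * s\<^sup>2) = - (norm (z - 0))\<^sup>2 / 2"
    using s by (simp add: power_mult_distrib)
  show ?thesis
    unfolding gauss_density_def p n by (simp only: mult_1_right) (use s in \<open>simp add: field_simps\<close>)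
qed

lemma Zbar_eq_std_gauss_integral:
  fixes f :: "real^'d \<Rightarrow> real"
  assumes "0 < lam * del" and [measurable]: "f \<in> borel_measurable borel"
  shows "Zbar lam del f x
    = (\<integral>z. gauss_density 1 0 z * exp (- f (x + sqrt (lam * del) *\<^sub>R z) / del) \<partial>lborel)"
proof -
  define s where "s = sqrt (lam * del)"
  have s: "s > 0" and s2: "s\<^sup>2 = lam * del"
    using assms(1) by (simp_all add: s_def)
  have "Zbar lam del f x = \<bar>s\<bar> ^ DIM(real^'d) *
      (\<integral>z. gauss_density (s\<^sup>2) x (x + s *\<^sub>R z) * exp (- f (x + s *\<^sub>R z) / del) \<partial>lborel)"
    unfolding Zbar_def s2 by (rule lborel_integral_affine) (use s in auto)
  also have "\<dots> = (\<integral>z. s ^ CARD('d) * gauss_density (s\<^sup>2) x (x + s *\<^sub>R z)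
      * exp (- f (x + s *\<^sub>R z) / del) \<partial>lborel)"
    using s by (simp add: mult.assoc)
  also have "\<dots> = (\<integral>z. gauss_density 1 0 z * exp (- f (x + s *\<^sub>R z) / del) \<partial>lborel)"
    by (simp only: gauss_density_affine[OF s])
  finally show ?thesis
    by (simp add: s_def)
qed

lemma Zbar_nonneg: "0 \<le> Zbar lam del f x"
  unfolding Zbar_def by (simp add: gauss_density_nonneg)

lemma (in prob_space) sample_mean_lower_tail:
  fixes X :: "nat \<Rightarrow> 'a \<Rightarrow> real"
  assumes indep: "indep_vars (\<lambda>_. borel) X {..<n}" and n: "0 < n" and ab: "a < b"
    and bounded: "\<And>i. i < n \<Longrightarrow> AE \<omega> in M. X i \<omega> \<in> {a..b}"
    and mean: "\<And>i. i < n \<Longrightarrow> Z \<le> expectation (X i)" and eps: "\<epsilon> \<le> Z"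
  shows "prob {\<omega> \<in> space M. 1 / real n * (\<Sum>i<n. X i \<omega>) < \<epsilon>}
    \<le> exp (- 2 * real n * (Z - \<epsilon>)\<^sup>2 / (b - a)\<^sup>2)"
proof -
  define \<mu> where "\<mu> = (\<Sum>i<n. expectation (X i))"
  interpret Hoeffding_ineq M "{..<n}" X "\<lambda>_. a" "\<lambda>_. b" \<mu>
    by unfold_locales (use indep bounded in \<open>auto simp: \<mu>_def\<close>)
  have [measurable]: "X i \<in> borel_measurable M" if "i < n" for i
    using indep that by (auto simp: indep_vars_def)
  define t where "t = \<mu> - real n * \<epsilon>"
  have "real n * Z \<le> \<mu>"
    using sum_mono[of "{..<n}" "\<lambda>_. Z" "\<lambda>i. expectation (X i)"] mean by (simp add: \<mu>_def)
  then have t: "real n * (Z - \<epsilon>) \<le> t" and "0 \<le> real n * (Z - \<epsilon>)"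
    using eps by (simp_all add: t_def algebra_simps mult_right_mono)
  then have "real n * (real n * (Z - \<epsilon>)\<^sup>2) \<le> t\<^sup>2"
    using power_mono[OF t, of 2] by (simp add: power_mult_distrib power2_eq_square mult_ac)
  then have exponent: "2 * real n * (Z - \<epsilon>)\<^sup>2 / (b - a)\<^sup>2 \<le> 2 * t\<^sup>2 / (real n * (b - a)\<^sup>2)"
    using n ab by (simp add: field_simps)
  have "{\<omega> \<in> space M. 1 / real n * (\<Sum>i<n. X i \<omega>) < \<epsilon>}
      \<subseteq> {\<omega> \<in> space M. (\<Sum>i<n. X i \<omega>) \<le> \<mu> - t}"
    using n by (auto simp: t_def field_simps)
  then have "prob {\<omega> \<in> space M. 1 / real n * (\<Sum>i<n. X i \<omega>) < \<epsilon>}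
      \<le> prob {\<omega> \<in> space M. (\<Sum>i<n. X i \<omega>) \<le> \<mu> - t}"
    by (rule finite_measure_mono) measurable
  also have "\<dots> \<le> exp (- 2 * t\<^sup>2 / (\<Sum>i<n. (b - a)\<^sup>2))"
    using Hoeffding_ineq_le[of t] t \<open>0 \<le> real n * (Z - \<epsilon>)\<close> n ab by simp
  also have "\<dots> \<le> exp (- 2 * real n * (Z - \<epsilon>)\<^sup>2 / (b - a)\<^sup>2)"
    using exponent by simp
  finally show ?thesis .
qed

lemma (in prob_space) indep_vars_row:
  assumes "indep_vars (\<lambda>_. N) (\<lambda>p. X (fst p) (snd p)) UNIV"
  shows "indep_vars (\<lambda>_. N) (X k) I"
proof -
  have "indep_vars (\<lambda>i. PiM {(k, i)} (\<lambda>_. N)) (\<lambda>i \<omega>. restrict (\<lambda>p. X (fst p) (snd p) \<omega>) {(k, i)}) I"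
    by (rule indep_vars_restrict[OF assms]) (auto simp: disjoint_family_on_def)
  then have "indep_vars (\<lambda>_. N) (\<lambda>i \<omega>. restrict (\<lambda>p. X (fst p) (snd p) \<omega>) {(k, i)} (k, i)) I"
    by (rule indep_vars_compose2) measurable
  then show ?thesis
    by simp
qed

lemma (in prob_space) gibbs_sample_mean_lower_tail:
  fixes \<xi> :: "nat \<Rightarrow> 'a \<Rightarrow> real^'d" and f :: "real^'d \<Rightarrow> real"
  assumes gauss: "\<And>i. distributed M lborel (\<xi> i) (\<lambda>z. ennreal (gauss_density 1 0 z))"
    and indep: "indep_vars (\<lambda>_. borel) \<xi> {..<n}" and n: "0 < n"
    and lam: "0 < lam" and del: "0 < del"
    and f_meas [measurable]: "f \<in> borel_measurable borel" and flow: "\<And>y. flow \<le> f y"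
    and eps: "\<epsilon> \<le> Z" and Z_le: "Z \<le> Zbar lam del f x"
  shows "prob {\<omega> \<in> space M.
      1 / real n * (\<Sum>i<n. exp (- f (x + sqrt (lam * del) *\<^sub>R \<xi> i \<omega>) / del)) < \<epsilon>}
    \<le> exp (- 2 * real n * (Z - \<epsilon>)\<^sup>2 / (exp (- flow / del))\<^sup>2)"
proof -
  define g where "g v = exp (- f (x + sqrt (lam * del) *\<^sub>R v) / del)" for v
  have [measurable]: "g \<in> borel_measurable borel"
    unfolding g_def by measurable
  have "indep_vars (\<lambda>_. borel) (\<lambda>i \<omega>. g (\<xi> i \<omega>)) {..<n}"
    by (rule indep_vars_compose2[OF indep]) measurable
  moreover have "g v \<in> {0 .. exp (- flow / del)}" for v
    using flow[of "x + sqrt (lam * del) *\<^sub>R v"] del by (simp add: g_def divide_right_mono)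
  moreover have "Zbar lam del f x = expectation (\<lambda>\<omega>. g (\<xi> i \<omega>))" for i
  proof -
    have "Zbar lam del f x = (\<integral>z. gauss_density 1 0 z * g z \<partial>lborel)"
      using Zbar_eq_std_gauss_integral[OF _ f_meas] lam del by (simp add: g_def)
    also have "\<dots> = expectation (\<lambda>\<omega>. g (\<xi> i \<omega>))"
      by (rule distributed_integral[OF gauss]) (simp_all add: gauss_density_nonneg)
    finally show ?thesis .
  qed
  ultimately show ?thesis
    using sample_mean_lower_tail[of "\<lambda>i \<omega>. g (\<xi> i \<omega>)" n 0 "exp (- flow / del)" Z \<epsilon>] n eps Z_le
    by (simp add: g_def)
qed

lemma (in prob_space) prob_indep_pair_le_sections:
  assumes indep: "indep_var MA W MB V" and S: "S \<in> sets (MA \<Otimes>\<^sub>M MB)"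
    and AE: "AE \<omega> in M. W \<omega> \<in> K"
    and section_bound: "\<And>w. w \<in> space MA \<Longrightarrow> w \<in> K \<Longrightarrow> prob {\<omega> \<in> space M. (w, V \<omega>) \<in> S} \<le> B"
  shows "prob {\<omega> \<in> space M. (W \<omega>, V \<omega>) \<in> S} \<le> B"
proof -
  have W [measurable]: "W \<in> measurable M MA" and V [measurable]: "V \<in> measurable M MB"
    and joint: "distr M MA W \<Otimes>\<^sub>M distr M MB V = distr M (MA \<Otimes>\<^sub>M MB) (\<lambda>\<omega>. (W \<omega>, V \<omega>))"
    using indep by (simp_all add: indep_var_distribution_eq)
  interpret PV: prob_space "distr M MB V"
    by (rule prob_space_distr) simp
  from AE AE_space have "AE \<omega> in M. 0 \<le> B"
    by eventually_elim (meson section_bound measurable_space[OF W] measure_nonneg order_trans)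
  then have "0 \<le> B"
    by simp
  have section_emeasure: "emeasure (distr M MB V) (Pair w -` S) \<le> ennreal B"
    if "w \<in> space MA" "w \<in> K" for w
  proof -
    have "emeasure (distr M MB V) (Pair w -` S) = emeasure M {\<omega> \<in> space M. (w, V \<omega>) \<in> S}"
      using S that(1) by (subst emeasure_distr) (auto intro: arg_cong2[where f=emeasure] simp: sets_Pair1)
    then show ?thesis
      using section_bound[OF that] by (simp add: emeasure_eq_measure ennreal_leI)
  qed
  have "emeasure M {\<omega> \<in> space M. (W \<omega>, V \<omega>) \<in> S} = emeasure (distr M MA W \<Otimes>\<^sub>M distr M MB V) S"
    unfolding joint using S by (subst emeasure_distr) (auto intro: arg_cong2[where f=emeasure])
  also have "\<dots> = (\<integral>\<^sup>+w. emeasure (distr M MB V) (Pair w -` S) \<partial>distr M MA W)"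
    using S by (intro PV.emeasure_pair_measure_alt) simp
  also have "\<dots> = (\<integral>\<^sup>+\<omega>. emeasure (distr M MB V) (Pair (W \<omega>) -` S) \<partial>M)"
    using PV.measurable_emeasure_Pair[of S MA] S by (intro nn_integral_distr) simp_all
  also have "\<dots> \<le> (\<integral>\<^sup>+\<omega>. ennreal B \<partial>M)"
  proof (rule nn_integral_mono_AE)
    from AE AE_space show "AE \<omega> in M. emeasure (distr M MB V) (Pair (W \<omega>) -` S) \<le> ennreal B"
      by eventually_elim (simp add: section_emeasure measurable_space[OF W])
  qed
  also have "\<dots> = ennreal B"
    by (simp add: emeasure_space_1)
  finally show ?thesis
    using \<open>0 \<le> B\<close> by (simp add: emeasure_eq_measure)
qed

lemma szoppa_x_cong_past_noise:
  assumes "\<And>j i. j < k \<Longrightarrow> \<xi> j i \<omega> = \<xi>' j i \<omega>'"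
  shows "szoppa_x x0 lam del f N \<xi> k \<omega> = szoppa_x x0 lam del f N \<xi>' k \<omega>'"
  using assms by (induction k) (simp_all add: Let_def)

lemma measurable_szoppa_x_past_noise:
  fixes f :: "real^'d \<Rightarrow> real"
  assumes [measurable]: "f \<in> borel_measurable borel" and "k \<le> K"
  shows "(\<lambda>w. szoppa_x x0 lam del f N (\<lambda>j i w. w (j, i)) k w)
    \<in> borel_measurable (PiM {p. fst p < K} (\<lambda>_. borel :: (real^'d) measure))"
  using \<open>k \<le> K\<close>
proof (induction k)
  case 0
  then show ?case
    by simp
next
  case (Suc k)
  then have [measurable]: "(\<lambda>w. szoppa_x x0 lam del f N (\<lambda>j i w. w (j, i)) k w)
      \<in> borel_measurable (PiM {p. fst p < K} (\<lambda>_. borel :: (real^'d) measure))"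
    by simp
  have "(k, i) \<in> {p. fst p < K}" for i
    using Suc by simp
  note [measurable] = measurable_component_singleton[OF this]
  show ?case
    by (simp add: Let_def) measurable
qed

lemma measurable_szoppa_sample_mean_past_row:
  fixes f :: "real^'d \<Rightarrow> real"
  assumes [measurable]: "f \<in> borel_measurable borel"
  shows "(\<lambda>z. 1 / real n * (\<Sum>i<n. exp (- f (szoppa_x x0 lam del f N (\<lambda>j i w. w (j, i)) k (fst z)
      + c *\<^sub>R snd z (k, i)) / del)))
    \<in> borel_measurable (PiM {p. fst p < k} (\<lambda>_. borel) \<Otimes>\<^sub>M PiM {p. fst p = k} (\<lambda>_. borel :: (real^'d) measure))"
proof -
  note [measurable] = measurable_szoppa_x_past_noise[of f k k x0 lam del N]
  have "(k, i) \<in> {p. fst p = k}" for i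
    by simp
  note [measurable] = measurable_component_singleton[OF this, where M="\<lambda>_. borel :: (real^'d) measure"]
  show ?thesis
    by measurable
qed

lemma (in prob_space) szoppa_sample_mean_lower_tail:
  fixes \<xi> :: "nat \<Rightarrow> nat \<Rightarrow> 'a \<Rightarrow> real^'d" and f :: "real^'d \<Rightarrow> real"
  assumes gauss: "\<And>k i. distributed M lborel (\<xi> k i) (\<lambda>z. ennreal (gauss_density 1 0 z))"
    and indep: "indep_vars (\<lambda>_. borel) (\<lambda>p. \<xi> (fst p) (snd p)) UNIV"
    and n: "0 < N k" and lam: "0 < lam" and del: "0 < del"
    and f_meas [measurable]: "f \<in> borel_measurable borel" and flow: "\<And>y. flow \<le> f y"
    and AE: "AE \<omega> in M. szoppa_x x0 lam del f N \<xi> k \<omega> \<in> K"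
    and Z_le: "\<And>x. x \<in> K \<Longrightarrow> Z \<le> Zbar lam del f x" and eps: "\<epsilon> \<le> Z"
  shows "prob {\<omega> \<in> space M.
      1 / real (N k) * (\<Sum>i<N k. exp (- f (szoppa_y x0 lam del f N \<xi> k i \<omega>) / del)) < \<epsilon>}
    \<le> exp (- 2 * real (N k) * (Z - \<epsilon>)\<^sup>2 / (exp (- flow / del))\<^sup>2)"
proof -
  \<comment> \<open>Condition on the noise of the rounds before k: it determines x^k and is
    independent of the k-th row.\<close>
  define past where "past = {p :: nat \<times> nat. fst p < k}"
  define row where "row = {p :: nat \<times> nat. fst p = k}"
  define noise where "noise A \<omega> = restrict (\<lambda>p. \<xi> (fst p) (snd p) \<omega>) A" for A \<omega>
  define h where "h w = szoppa_x x0 lam del f N (\<lambda>j i w. w (j, i)) k w" for w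
  define G where "G z = 1 / real (N k) *
      (\<Sum>i<N k. exp (- f (h (fst z) + sqrt (lam * del) *\<^sub>R snd z (k, i)) / del))" for z
  define S where "S = {z \<in> space (PiM past (\<lambda>_. borel) \<Otimes>\<^sub>M PiM row (\<lambda>_. borel)). G z < \<epsilon>}"
  have [measurable]: "\<xi> j i \<in> borel_measurable M" for j i
    using distributed_measurable[OF gauss] by simp
  have noise_meas [measurable]: "noise A \<in> measurable M (PiM A (\<lambda>_. borel))" for A
    unfolding noise_def by (rule measurable_restrict) simp
  have h_noise: "h (noise past \<omega>) = szoppa_x x0 lam del f N \<xi> k \<omega>" for \<omega>
    unfolding h_def noise_def past_def by (rule szoppa_x_cong_past_noise) simp
  have noise_row: "noise row \<omega> (k, i) = \<xi> k i \<omega>" for \<omega> i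
    by (simp add: noise_def row_def)
  have "indep_var (PiM past (\<lambda>_. borel)) (noise past) (PiM row (\<lambda>_. borel)) (noise row)"
    unfolding noise_def by (rule indep_var_restrict[OF indep]) (auto simp: past_def row_def)
  moreover have "S \<in> sets (PiM past (\<lambda>_. borel) \<Otimes>\<^sub>M PiM row (\<lambda>_. borel))"
    using measurable_szoppa_sample_mean_past_row[OF f_meas, of "N k" x0 lam del N k "sqrt (lam * del)"]
    unfolding S_def G_def h_def past_def row_def by measurable
  moreover have "AE \<omega> in M. noise past \<omega> \<in> h -` K"
    using AE by (simp add: h_noise)
  moreover have "prob {\<omega> \<in> space M. (w, noise row \<omega>) \<in> S}
      \<le> exp (- 2 * real (N k) * (Z - \<epsilon>)\<^sup>2 / (exp (- flow / del))\<^sup>2)"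
    if "w \<in> space (PiM past (\<lambda>_. borel))" "w \<in> h -` K" for w
  proof -
    have "{\<omega> \<in> space M. (w, noise row \<omega>) \<in> S} = {\<omega> \<in> space M.
        1 / real (N k) * (\<Sum>i<N k. exp (- f (h w + sqrt (lam * del) *\<^sub>R \<xi> k i \<omega>) / del)) < \<epsilon>}"
      using that(1) measurable_space[OF noise_meas]
      by (auto simp: S_def G_def noise_row space_pair_measure)
    then show ?thesis
      using gibbs_sample_mean_lower_tail[OF gauss indep_vars_row[OF indep] n lam del f_meas flow eps Z_le]
        that(2) by simp
  qed
  ultimately have "prob {\<omega> \<in> space M. (noise past \<omega>, noise row \<omega>) \<in> S}
      \<le> exp (- 2 * real (N k) * (Z - \<epsilon>)\<^sup>2 / (exp (- flow / del))\<^sup>2)"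
    by (rule prob_indep_pair_le_sections)
  moreover have "{\<omega> \<in> space M. (noise past \<omega>, noise row \<omega>) \<in> S} = {\<omega> \<in> space M.
      1 / real (N k) * (\<Sum>i<N k. exp (- f (szoppa_y x0 lam del f N \<xi> k i \<omega>) / del)) < \<epsilon>}"
    using measurable_space[OF noise_meas]
    by (auto simp: S_def G_def h_noise noise_row szoppa_y_def space_pair_measure)
  ultimately show ?thesis
    by simp
qed

theorem proposition5:
  fixes P :: "'w measure" and \<xi> :: "nat \<Rightarrow> nat \<Rightarrow> 'w \<Rightarrow> real^'d"
    and f :: "real^'d \<Rightarrow> real" and x0 :: "real^'d" and N :: "nat \<Rightarrow> nat"
    and lam del flow M :: real
  assumes "prob_space P"
    and "\<And>k i. distributed P lborel (\<xi> k i) (\<lambda>z. ennreal (gauss_density 1 0 z))"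
    and "prob_space.indep_vars P (\<lambda>_. borel) (\<lambda>p. \<xi> (fst p) (snd p)) UNIV"
    and "\<And>k. N k > 0"
    and "lam > 0" and "del > 0"
    and "continuous_on UNIV f" and "\<exists>xm. \<forall>y. f xm \<le> f y"
    and "(\<integral>\<^sup>+ y. ennreal (exp (- f y / del)) \<partial>lborel) < \<infinity>"
    and "\<And>y. f y \<ge> flow"
    and "AE \<omega> in P. \<forall>k. norm (szoppa_x x0 lam del f N \<xi> k \<omega>) \<le> M"
  shows "\<forall>\<epsilon> k. 0 < \<epsilon> \<and> \<epsilon> < (INF x\<in>cball 0 M. Zbar lam del f x) \<longrightarrow>
     measure P {\<omega> \<in> space P.
        (1 / real (N k)) * (\<Sum>i<N k. exp (- f (szoppa_y x0 lam del f N \<xi> k i \<omega>) / del)) < \<epsilon>}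
     \<le> exp (- 2 * real (N k) * ((INF x\<in>cball 0 M. Zbar lam del f x) - \<epsilon>)\<^sup>2
              / (exp (- flow / del))\<^sup>2)"
proof (intro allI impI, elim conjE)
  fix \<epsilon> k
  let ?Z = "INF x\<in>cball 0 M. Zbar lam del f x"
  assume "0 < \<epsilon>" and "\<epsilon> < ?Z"
  interpret prob_space P
    by (fact assms(1))
  have f_meas: "f \<in> borel_measurable borel"
    using assms(7) by (rule borel_measurable_continuous_onI)
  show "measure P {\<omega> \<in> space P.
        1 / real (N k) * (\<Sum>i<N k. exp (- f (szoppa_y x0 lam del f N \<xi> k i \<omega>) / del)) < \<epsilon>}
     \<le> exp (- 2 * real (N k) * (?Z - \<epsilon>)\<^sup>2 / (exp (- flow / del))\<^sup>2)"
  proof (rule szoppa_sample_mean_lower_tail[where N=N and k=k, OF assms(2,3) assms(4) assms(5,6) f_meas assms(10)])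
    show "AE \<omega> in P. szoppa_x x0 lam del f N \<xi> k \<omega> \<in> cball 0 M"
      using assms(11) by eventually_elim simp
    show "?Z \<le> Zbar lam del f x" if "x \<in> cball 0 M" for x
      using that by (intro cINF_lower bdd_belowI2[of _ 0]) (simp_all add: Zbar_nonneg)
  qed (use \<open>\<epsilon> < ?Z\<close> in simp)
qed

end
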